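(* As formal power series in $z$ (with coefficients rational functions of $q,s$), $$\sum_{n\ge0}\frac{r_{2n}(s,q)}{(q^2;q^2)_n}z^n=\frac{e_{q^2}(s^2z)\,e_{q^2}(z)}{e_q(-sz)},\qquad \sum_{n\ge0}\frac{r_{2n+1}(s,q)}{(q^2;q^2)_n}z^n=(1+s)\frac{e_{q^2}(s^2z)\,e_{q^2}(z)}{e_q(-qsz)}.$$
   Context: $q$ is an indeterminate (or a real number with $|q|<1$). $(x;q)_n=\prod_{j=0}^{n-1}(1-q^jx)$. The Gaussian binomial coefficient is $\begin{bmatrix} n\\ j\end{bmatrix}_q=\frac{(q;q)_n}{(q;q)_j(q;q)_{n-j}}$ for $0\le j\le n$ and $0$ otherwise. The Rogers–Szegö polynomials are $r_n(s,q)=\sum_{j=0}^n\begin{bmatrix} n\\ j\end{bmatrix}_q s^j$. $e_q(w)=\sum_{n\ge0}\frac{w^n}{(q;q)_n}$ as a formal power series, and $1/e_q(w)$ denotes its formal reciprocal. *)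

theory Defs
  imports "HOL-Computational_Algebra.Formal_Power_Series"
begin

definition qpoch :: "'a::comm_ring_1 \<Rightarrow> 'a \<Rightarrow> nat \<Rightarrow> 'a" where
  "qpoch x q n = (\<Prod>j<n. 1 - q ^ j * x)"

definition gauss_binom :: "'a::field \<Rightarrow> nat \<Rightarrow> nat \<Rightarrow> 'a" where
  "gauss_binom q n j =
     (if j \<le> n then qpoch q q n / (qpoch q q j * qpoch q q (n - j)) else 0)"

definition rogers_szego :: "nat \<Rightarrow> 'a::field \<Rightarrow> 'a \<Rightarrow> 'a" where
  "rogers_szego n s q = (\<Sum>j\<le>n. gauss_binom q n j * s ^ j)"

definition e_q :: "'a::field \<Rightarrow> 'a fps" where
  "e_q q = Abs_fps (\<lambda>n. 1 / qpoch q q n)"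

definition e_q_at :: "'a::field \<Rightarrow> 'a \<Rightarrow> 'a fps" where
  "e_q_at q c = fps_compose (e_q q) (fps_const c * fps_X)"

end

theory Submission
  imports Defs
begin

text \<open>
  Write \<open>G_e(z) = \<Sum>_n r_{2n+e}(s,q) z^n / (q^2;q^2)_n\<close> for \<open>e = 0, 1\<close>. Iterating the
  three-term recurrence of the Rogers-Szego polynomials gives
  \<open>r_{m+4} = (1 + s^2 + s q^{m+2} (1 + q)) r_{m+2} - s^2 (1 - q^{m+1}) (1 - q^{m+2}) r_m\<close>,
  which says exactly that \<open>G_e(q^2 z) (1 + q^e s z) (1 + q^{e+1} s z) = G_e(z) (1 - s^2 z) (1 - z)\<close>.
  Since \<open>e_p(p c z) = (1 - c z) e_p(c z)\<close>, the product \<open>G_e(z) e_q(-q^e s z)\<close> then satisfies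
  \<open>f(q^2 z) = f(z) (1 - s^2 z) (1 - z)\<close>, as does \<open>e_{q^2}(s^2 z) e_{q^2}(z)\<close>; when \<open>q\<close> is not a
  root of unity, a solution of such an equation is determined by its constant term.
\<close>

lemma qpoch_0 [simp]: "qpoch x q 0 = 1"
  by (simp add: qpoch_def)

lemma qpoch_Suc: "qpoch x q (Suc n) = qpoch x q n * (1 - q ^ n * x)"
  by (simp add: qpoch_def lessThan_Suc mult.commute)

lemma qpoch_base_Suc: "qpoch q q (Suc n) = qpoch q q n * (1 - q ^ Suc n)"
  by (simp add: qpoch_Suc mult.commute)

lemma qpoch_base_nonzero:
  fixes q :: "'a::field"
  assumes "\<And>n. q ^ Suc n \<noteq> 1"
  shows "qpoch q q n \<noteq> 0"
  using assms by (induction n) (simp_all add: qpoch_base_Suc)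

lemma one_minus_power_nonzero:
  fixes q :: "'a::field"
  assumes "\<And>n. q ^ Suc n \<noteq> 1" and "0 < j"
  shows "1 - q ^ j \<noteq> 0"
  using assms(1)[of "j - 1"] assms(2) by simp

lemma gauss_binom_eq_0 [simp]: "n < j \<Longrightarrow> gauss_binom q n j = 0"
  by (simp add: gauss_binom_def)

lemma rogers_szego_0 [simp]: "rogers_szego 0 s q = 1"
  by (simp add: rogers_szego_def gauss_binom_def)

context
  fixes q :: "'a::field"
  assumes q_not_root: "\<And>n. q ^ Suc n \<noteq> 1"
begin

private lemma base_nonzero: "qpoch q q n \<noteq> 0" "1 - q ^ Suc n \<noteq> 0"
  using qpoch_base_nonzero q_not_root by auto

lemma gauss_binom_0 [simp]: "gauss_binom q n 0 = 1"
  and gauss_binom_self [simp]: "gauss_binom q n n = 1"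
  using base_nonzero by (simp_all add: gauss_binom_def)

lemma gauss_binom_Suc_Suc:
  "gauss_binom q (Suc n) (Suc j) = gauss_binom q n j + q ^ Suc j * gauss_binom q n (Suc j)"
proof (cases "j < n")
  case True
  then obtain d where n: "n = j + Suc d"
    using less_imp_add_positive by (metis Suc_pred add_Suc_right)
  define P a b x y where "P = qpoch q q n" and "a = qpoch q q j" and "b = qpoch q q d"
    and "x = q ^ Suc j" and "y = q ^ Suc d"
  have diffs: "Suc n - Suc j = Suc d" "n - j = Suc d" "n - Suc j = d"
    using n by simp_all
  have "q ^ Suc n = x * y"
    by (simp add: x_def y_def n power_add[symmetric])
  then have lhs: "gauss_binom q (Suc n) (Suc j) = P * (1 - x * y) / (a * (1 - x) * (b * (1 - y)))"
    using True by (simp add: gauss_binom_def diffs P_def a_def b_def x_def y_def qpoch_base_Suc)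
  have rhs1: "gauss_binom q n j = P / (a * (b * (1 - y)))"
    using True by (simp add: gauss_binom_def diffs P_def a_def b_def y_def qpoch_base_Suc)
  have rhs2: "gauss_binom q n (Suc j) = P / (a * (1 - x) * b)"
    using True by (simp add: gauss_binom_def diffs P_def a_def b_def x_def qpoch_base_Suc)
  have "a \<noteq> 0" "b \<noteq> 0" "1 - x \<noteq> 0" "1 - y \<noteq> 0"
    using base_nonzero by (simp_all add: a_def b_def x_def y_def)
  then show ?thesis
    unfolding x_def[symmetric] lhs rhs1 rhs2 by (simp add: divide_simps) (simp add: algebra_simps)
next
  case False
  then show ?thesis
    by (cases "j = n") simp_all
qed

lemma gauss_binom_Suc_Suc_absorb:
  "(1 - q ^ Suc j) * gauss_binom q (Suc n) (Suc j) = (1 - q ^ Suc n) * gauss_binom q n j"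
proof (cases "j \<le> n")
  case True
  then show ?thesis
    using base_nonzero[of j] base_nonzero[of "n - j"]
    by (simp add: gauss_binom_def qpoch_base_Suc field_simps)
qed (simp add: gauss_binom_def)

lemma rogers_szego_1: "rogers_szego (Suc 0) s q = 1 + s"
  using gauss_binom_self[of 1] by (simp add: rogers_szego_def)

lemma rogers_szego_Suc_pascal:
  "rogers_szego (Suc n) s q = s * rogers_szego n s q + (\<Sum>j\<le>n. q ^ j * gauss_binom q n j * s ^ j)"
proof -
  have shift: "(\<Sum>j\<le>n. q ^ j * gauss_binom q n j * s ^ j)
      = 1 + (\<Sum>j\<le>n. q ^ Suc j * gauss_binom q n (Suc j) * s ^ Suc j)"
    using sum.atMost_Suc_shift[of "\<lambda>j. q ^ j * gauss_binom q n j * s ^ j" n] by simp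
  have "rogers_szego (Suc n) s q = 1 + (\<Sum>j\<le>n. gauss_binom q (Suc n) (Suc j) * s ^ Suc j)"
    unfolding rogers_szego_def sum.atMost_Suc_shift by simp
  also have "\<dots> = s * rogers_szego n s q
      + (1 + (\<Sum>j\<le>n. q ^ Suc j * gauss_binom q n (Suc j) * s ^ Suc j))"
    by (simp add: gauss_binom_Suc_Suc rogers_szego_def algebra_simps sum.distrib sum_distrib_left)
  finally show ?thesis
    by (simp only: shift)
qed

lemma rogers_szego_Suc_absorb:
  "rogers_szego (Suc n) s q - (\<Sum>j\<le>Suc n. q ^ j * gauss_binom q (Suc n) j * s ^ j)
     = s * (1 - q ^ Suc n) * rogers_szego n s q"
proof -
  have "rogers_szego (Suc n) s q - (\<Sum>j\<le>Suc n. q ^ j * gauss_binom q (Suc n) j * s ^ j)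
      = (\<Sum>j\<le>Suc n. (1 - q ^ j) * gauss_binom q (Suc n) j * s ^ j)"
    unfolding rogers_szego_def by (simp add: sum_subtractf[symmetric] algebra_simps)
  also have "\<dots> = (\<Sum>j\<le>n. s * ((1 - q ^ Suc j) * gauss_binom q (Suc n) (Suc j)) * s ^ j)"
    unfolding sum.atMost_Suc_shift by (simp add: algebra_simps)
  also have "\<dots> = s * (1 - q ^ Suc n) * rogers_szego n s q"
    by (simp only: gauss_binom_Suc_Suc_absorb)
      (simp add: rogers_szego_def sum_distrib_left algebra_simps)
  finally show ?thesis .
qed

lemma rogers_szego_Suc_Suc:
  "rogers_szego (Suc (Suc n)) s q
     = (1 + s) * rogers_szego (Suc n) s q - s * (1 - q ^ Suc n) * rogers_szego n s q"
  using rogers_szego_Suc_pascal[of "Suc n" s] rogers_szego_Suc_absorb[of n s]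
  by (simp add: algebra_simps)

lemma rogers_szego_two_step_rec:
  "rogers_szego (n + 4) s q
     = (1 + s\<^sup>2 + s * q ^ (n + 2) * (1 + q)) * rogers_szego (n + 2) s q
       - s\<^sup>2 * (1 - q ^ (n + 1)) * (1 - q ^ (n + 2)) * rogers_szego n s q"
proof -
  define x where "x = q ^ (n + 1)"
  define r0 r1 r2 r3 r4 where "r0 = rogers_szego n s q" and "r1 = rogers_szego (n + 1) s q"
    and "r2 = rogers_szego (n + 2) s q" and "r3 = rogers_szego (n + 3) s q"
    and "r4 = rogers_szego (n + 4) s q"
  have rec2: "r2 = (1 + s) * r1 - s * (1 - x) * r0"
    and rec3: "r3 = (1 + s) * r2 - s * (1 - x * q) * r1"
    and rec4: "r4 = (1 + s) * r3 - s * (1 - x * q * q) * r2"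
    using rogers_szego_Suc_Suc[of n s] rogers_szego_Suc_Suc[of "Suc n" s]
      rogers_szego_Suc_Suc[of "Suc (Suc n)" s]
    by (simp_all add: r0_def r1_def r2_def r3_def r4_def x_def numeral_eq_Suc mult_ac)
  have "r4 = ((1 + s)\<^sup>2 - s * (1 - x * q * q)) * r2
      - s * (1 - x * q) * ((1 + s) * r1)"
    unfolding rec4 rec3 by (simp add: power2_eq_square algebra_simps)
  also have "(1 + s) * r1 = r2 + s * (1 - x) * r0"
    unfolding rec2 by simp
  finally have "r4 = (1 + s\<^sup>2 + s * (x * q) * (1 + q)) * r2
      - s\<^sup>2 * (1 - x) * (1 - x * q) * r0"
    by (simp add: power2_eq_square algebra_simps)
  then show ?thesis
    by (simp add: r0_def r2_def r4_def x_def mult_ac)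
qed

lemma rogers_szego_two_step_rec_start:
  assumes "e \<le> 1"
  shows "rogers_szego (e + 2) s q = (1 + s\<^sup>2 + s * q ^ e * (1 + q)) * rogers_szego e s q"
proof -
  have r2: "rogers_szego 2 s q = 1 + s\<^sup>2 + s * (1 + q)"
    using rogers_szego_Suc_Suc[of 0 s]
    by (simp add: numeral_2_eq_2 rogers_szego_1 power2_eq_square algebra_simps)
  have r3: "rogers_szego 3 s q = (1 + s\<^sup>2 + s * q * (1 + q)) * (1 + s)"
    using rogers_szego_Suc_Suc[of "Suc 0" s] r2
    by (simp add: numeral_3_eq_3 numeral_2_eq_2 rogers_szego_1 power2_eq_square algebra_simps)
  consider "e = 0" | "e = 1"
    using assms by linarith
  then show ?thesis
    using r2 r3 by cases (simp_all add: numeral_2_eq_2 numeral_3_eq_3 rogers_szego_1)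
qed

end

unbundle fps_syntax

lemma fps_mult_one_minus_const_X_nth:
  fixes f :: "'a::comm_ring_1 fps"
  shows "(f * (1 - fps_const a * fps_X)) $ n = f $ n - (if n = 0 then 0 else a * f $ (n - 1))"
proof -
  have "f * (1 - fps_const a * fps_X) = f - fps_const a * (f * fps_X)"
    by (simp add: algebra_simps)
  then show ?thesis
    by simp
qed

lemma fps_dilation_eq_unique:
  fixes c :: "'a::field"
  assumes c: "\<And>n. c ^ Suc n \<noteq> 1" and M0: "M $ 0 = 1"
    and f: "f oo (fps_const c * fps_X) = f * M" and g: "g oo (fps_const c * fps_X) = g * M"
    and fg0: "f $ 0 = g $ 0"
  shows "f = g"
proof -
  define d where "d = f - g"
  have d: "d oo (fps_const c * fps_X) = d * M"
    unfolding d_def fps_compose_sub_distrib f g by (simp add: algebra_simps)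
  have "d $ n = 0" for n
  proof (induction n rule: less_induct)
    case (less n)
    show ?case
    proof (cases n)
      case 0
      then show ?thesis using fg0 by (simp add: d_def)
    next
      case (Suc m)
      have "(d * M) $ n = (\<Sum>i=0..m. d $ i * M $ (n - i)) + d $ n"
        unfolding fps_mult_nth Suc by (simp add: sum.atLeast0_atMost_Suc M0)
      also have "(\<Sum>i=0..m. d $ i * M $ (n - i)) = 0"
        using less Suc by (intro sum.neutral) auto
      finally have "c ^ n * d $ n = d $ n"
        using arg_cong[OF d, of "\<lambda>h. h $ n"] by simp
      then have "(c ^ n - 1) * d $ n = 0"
        by (simp add: algebra_simps)
      with c show ?thesis
        by (simp add: Suc)
    qed
  qed
  then show ?thesis
    by (simp add: d_def fps_eq_iff)
qed

lemma e_q_at_nth [simp]: "e_q_at p c $ n = c ^ n / qpoch p p n"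
  by (simp add: e_q_at_def e_q_def)

lemma e_q_at_dilate: "e_q_at p c oo (fps_const a * fps_X) = e_q_at p (a * c)"
  by (simp add: fps_eq_iff power_mult_distrib)

lemma e_q_at_base_mult:
  fixes p :: "'a::field"
  assumes p: "\<And>n. p ^ Suc n \<noteq> 1"
  shows "e_q_at p (p * c) = e_q_at p c * (1 - fps_const c * fps_X)"
proof (rule fps_ext)
  fix n
  show "e_q_at p (p * c) $ n = (e_q_at p c * (1 - fps_const c * fps_X)) $ n"
  proof (cases n)
    case (Suc m)
    have "qpoch p p m \<noteq> 0" "1 - p ^ Suc m \<noteq> 0"
      using qpoch_base_nonzero p by auto
    then show ?thesis
      by (simp add: Suc fps_mult_one_minus_const_X_nth qpoch_base_Suc power_mult_distrib field_simps)
  qed (simp add: fps_mult_one_minus_const_X_nth)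
qed

lemma eq_divide_of_dilation_eqs:
  fixes c :: "'a::field"
  assumes c: "\<And>n. c ^ Suc n \<noteq> 1" and M0: "M $ 0 = 1"
    and G: "(G oo (fps_const c * fps_X)) * Q = G * M"
    and B: "B oo (fps_const c * fps_X) = B * Q"
    and A: "A oo (fps_const c * fps_X) = A * M"
    and B0: "B $ 0 \<noteq> 0" and GBA0: "G $ 0 * B $ 0 = A $ 0"
  shows "G = A / B"
proof -
  have "(G * B) oo (fps_const c * fps_X) = (G oo (fps_const c * fps_X)) * (B * Q)"
    by (simp add: fps_compose_mult_distrib B)
  also have "\<dots> = ((G oo (fps_const c * fps_X)) * Q) * B"
    by (simp only: mult_ac)
  also have "\<dots> = (G * B) * M"
    by (simp only: G) (simp only: mult_ac)
  finally have "G * B = A"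
    using fps_dilation_eq_unique[OF c M0 _ A] GBA0 by simp
  moreover have "B \<noteq> 0"
    using B0 by auto
  ultimately show ?thesis
    using fps_divide_times_eq[of B G] by simp
qed

context
  fixes q :: "'a::field"
  assumes q_not_root: "\<And>n. q ^ Suc n \<noteq> 1"
begin

lemma square_not_root: "(q\<^sup>2) ^ Suc n \<noteq> 1"
  using q_not_root[of "2 * n + 1"] by (simp only: power_mult[symmetric]) simp

lemma e_q_at_dilate_square:
  "e_q_at q c oo (fps_const (q\<^sup>2) * fps_X)
     = e_q_at q c * ((1 - fps_const c * fps_X) * (1 - fps_const (q * c) * fps_X))"
proof -
  have "e_q_at q c oo (fps_const (q\<^sup>2) * fps_X) = e_q_at q (q * (q * c))"
    by (simp add: e_q_at_dilate power2_eq_square mult.assoc)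
  then show ?thesis
    by (simp add: e_q_at_base_mult[OF q_not_root] mult.assoc)
qed

lemma rogers_szego_half_coeff_rec:
  fixes s :: 'a
  assumes "e \<le> 1"
  defines "g k \<equiv> rogers_szego (2 * k + e) s q / qpoch (q\<^sup>2) (q\<^sup>2) k"
  shows "(1 - q\<^sup>2) * g 1 = (1 + s\<^sup>2 + s * q ^ e * (1 + q)) * g 0"
    and "(1 - q ^ (2 * k + 4)) * g (k + 2)
           = (1 + s\<^sup>2 + s * q ^ (2 * k + 2 + e) * (1 + q)) * g (k + 1)
             - s\<^sup>2 * (1 - q ^ (2 * k + 2 * e + 1)) * g k"
proof -
  have P_Suc: "qpoch (q\<^sup>2) (q\<^sup>2) (Suc k)
      = qpoch (q\<^sup>2) (q\<^sup>2) k * (1 - q ^ (2 * k + 2))" for k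
    unfolding qpoch_base_Suc by (simp only: power_mult[symmetric]) simp
  have qpoch_nonzero: "qpoch (q\<^sup>2) (q\<^sup>2) k \<noteq> 0" for k
    using qpoch_base_nonzero[OF square_not_root] .
  note power_nonzero = one_minus_power_nonzero[OF q_not_root]
  show "(1 - q\<^sup>2) * g 1 = (1 + s\<^sup>2 + s * q ^ e * (1 + q)) * g 0"
    using rogers_szego_two_step_rec_start[OF q_not_root assms(1), of s] power_nonzero[of 2]
    by (simp add: g_def qpoch_base_Suc add.commute power2_eq_square)
  define m u d1 d2 where "m = 2 * k + e" and "u = qpoch (q\<^sup>2) (q\<^sup>2) k"
    and "d1 = 1 - q ^ (2 * k + 2)" and "d2 = 1 - q ^ (2 * k + 4)"
  \<comment> \<open>for either parity one factor is \<open>d1\<close>, the last factor of \<open>(q^2;q^2)_{k+1}\<close>\<close>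
  have "(1 - q ^ (m + 1)) * (1 - q ^ (m + 2)) = d1 * (1 - q ^ (2 * k + 2 * e + 1))"
    using assms(1) by (cases e) (simp_all add: m_def d1_def)
  then have rec: "rogers_szego (m + 4) s q
      = (1 + s\<^sup>2 + s * q ^ (m + 2) * (1 + q)) * rogers_szego (m + 2) s q
        - s\<^sup>2 * (1 - q ^ (2 * k + 2 * e + 1)) * (d1 * rogers_szego m s q)"
    using rogers_szego_two_step_rec[OF q_not_root, of m s] by (simp add: mult_ac)
  have P1: "qpoch (q\<^sup>2) (q\<^sup>2) (k + 1) = u * d1"
    using P_Suc[of k] by (simp add: u_def d1_def)
  have "2 * Suc k + 2 = 2 * k + 4"
    by simp
  then have P2: "qpoch (q\<^sup>2) (q\<^sup>2) (k + 2) = u * d1 * d2"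
    using P_Suc[of "Suc k"] P1 unfolding d2_def \<open>2 * Suc k + 2 = 2 * k + 4\<close> by simp
  have idx: "2 * (k + 2) + e = m + 4" "2 * (k + 1) + e = m + 2" "2 * k + e = m"
    by (simp_all add: m_def)
  have "d1 \<noteq> 0" "d2 \<noteq> 0"
    unfolding d1_def d2_def by (rule power_nonzero, simp)+
  moreover have "u \<noteq> 0"
    unfolding u_def by (rule qpoch_nonzero)
  ultimately show "(1 - q ^ (2 * k + 4)) * g (k + 2)
           = (1 + s\<^sup>2 + s * q ^ (2 * k + 2 + e) * (1 + q)) * g (k + 1)
             - s\<^sup>2 * (1 - q ^ (2 * k + 2 * e + 1)) * g k"
    unfolding g_def idx P1 P2 u_def[symmetric] d2_def[symmetric] rec
    by (simp add: m_def divide_simps)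
qed

lemma rogers_szego_half_series_dilation:
  fixes s :: 'a
  assumes "e \<le> 1"
  defines "G \<equiv> Abs_fps (\<lambda>k. rogers_szego (2 * k + e) s q / qpoch (q\<^sup>2) (q\<^sup>2) k)"
    and "c \<equiv> - (q ^ e * s)"
  shows "(G oo (fps_const (q\<^sup>2) * fps_X))
           * ((1 - fps_const c * fps_X) * (1 - fps_const (q * c) * fps_X))
         = G * ((1 - fps_const (s\<^sup>2) * fps_X) * (1 - fps_const 1 * fps_X))"
proof (rule fps_ext)
  fix n :: nat
  define g where "g k = G $ k" for k
  note rec = rogers_szego_half_coeff_rec[OF assms(1), where s = s]
  consider "n = 0" | "n = 1" | k where "n = k + 2"
    by (cases n; cases "n - 1") auto
  then show "((G oo (fps_const (q\<^sup>2) * fps_X))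
           * ((1 - fps_const c * fps_X) * (1 - fps_const (q * c) * fps_X))) $ n
         = (G * ((1 - fps_const (s\<^sup>2) * fps_X) * (1 - fps_const 1 * fps_X))) $ n"
    (is "?lhs $ n = ?rhs $ n")
  proof cases
    case 1
    then show ?thesis
      by (simp only: mult.assoc[symmetric] fps_mult_one_minus_const_X_nth) simp
  next
    case 2
    have "(1 - q\<^sup>2) * g 1 = (1 + s\<^sup>2 + s * q ^ e * (1 + q)) * g 0"
      using rec(1) by (simp add: g_def G_def)
    then show ?thesis
      unfolding 2 mult.assoc[symmetric] fps_mult_one_minus_const_X_nth fps_nth_compose_linear
      by (simp add: g_def[symmetric] c_def power2_eq_square algebra_simps)
  next
    case 3
    define x y where "x = q ^ (2 * k)" and "y = q ^ e"
    have pow: "(q\<^sup>2) ^ k = x"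
      by (simp add: x_def power_mult)
    have exps: "q ^ (2 * k + 4) = x * (q\<^sup>2 * q\<^sup>2)" "q ^ (2 * k + 2 + e) = x * q\<^sup>2 * y"
      "q ^ (2 * k + 2 * e + 1) = x * y\<^sup>2 * q"
      unfolding x_def y_def power_add power_one_right power_even_eq by simp_all
    have key: "(1 - x * (q\<^sup>2 * q\<^sup>2)) * g (k + 2)
        = (1 + s\<^sup>2 + s * (x * q\<^sup>2 * y) * (1 + q)) * g (k + 1) - s\<^sup>2 * (1 - x * y\<^sup>2 * q) * g k"
      using rec(2)[of k] unfolding g_def G_def fps_nth_Abs_fps exps .
    have "?lhs $ (k + 2) - ?rhs $ (k + 2)
        = (1 + s\<^sup>2 + s * (x * q\<^sup>2 * y) * (1 + q)) * g (k + 1) - s\<^sup>2 * (1 - x * y\<^sup>2 * q) * g k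
          - (1 - x * (q\<^sup>2 * q\<^sup>2)) * g (k + 2)"
      unfolding mult.assoc[symmetric] fps_mult_one_minus_const_X_nth fps_nth_compose_linear
      by (simp add: g_def[symmetric] c_def pow y_def[symmetric] power2_eq_square[of s]
          power2_eq_square[of y] algebra_simps)
    then show ?thesis
      using key 3 by simp
  qed
qed

lemma rogers_szego_half_series:
  fixes s :: 'a
  assumes "e \<le> 1"
  shows "Abs_fps (\<lambda>k. rogers_szego (2 * k + e) s q / qpoch (q\<^sup>2) (q\<^sup>2) k)
     = fps_const (rogers_szego e s q)
       * (e_q_at (q\<^sup>2) (s\<^sup>2) * e_q_at (q\<^sup>2) 1 / e_q_at q (- (q ^ e * s)))"
proof -
  define G where "G = Abs_fps (\<lambda>k. rogers_szego (2 * k + e) s q / qpoch (q\<^sup>2) (q\<^sup>2) k)"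
  define A where "A = e_q_at (q\<^sup>2) (s\<^sup>2) * e_q_at (q\<^sup>2) 1"
  define B where "B = e_q_at q (- (q ^ e * s))"
  define M where "M = (1 - fps_const (s\<^sup>2) * fps_X) * (1 - fps_const 1 * fps_X :: 'a fps)"
  define Q where "Q = (1 - fps_const (- (q ^ e * s)) * fps_X)
    * (1 - fps_const (q * - (q ^ e * s)) * fps_X)"
  define r where "r = rogers_szego e s q"
  let ?dilate = "\<lambda>f. f oo (fps_const (q\<^sup>2) * fps_X)"
  have X0: "(fps_const (q\<^sup>2) * fps_X) $ 0 = 0"
    by simp
  have "?dilate A = e_q_at (q\<^sup>2) (q\<^sup>2 * s\<^sup>2) * e_q_at (q\<^sup>2) (q\<^sup>2 * 1)"
    unfolding A_def fps_compose_mult_distrib[OF X0] e_q_at_dilate ..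
  also have "\<dots> = A * M"
    unfolding e_q_at_base_mult[OF square_not_root] A_def M_def by (simp only: mult_ac)
  finally have A_eq: "?dilate (fps_const r * A) = (fps_const r * A) * M"
    by (simp add: fps_compose_mult_distrib[OF X0] mult.assoc)
  have G_eq: "?dilate G * Q = G * M"
    using rogers_szego_half_series_dilation[OF assms] by (simp only: G_def M_def Q_def)
  have B_eq: "?dilate B = B * Q"
    unfolding B_def Q_def by (rule e_q_at_dilate_square)
  have "G = fps_const r * A / B"
    by (rule eq_divide_of_dilation_eqs[OF square_not_root _ G_eq B_eq A_eq])
      (simp_all add: A_def B_def G_def M_def r_def)
  also have "\<dots> = fps_const r * (A / B)"
    by (rule fps_divide_times) (simp add: B_def)
  finally show ?thesis
    by (simp only: G_def A_def B_def r_def)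
qed

end

theorem lemma1p2:
  fixes q s :: "'a::field"
  assumes q_not_root_of_unity: "\<forall>k::nat. k \<ge> 1 \<longrightarrow> q ^ k \<noteq> 1"
  shows "(Abs_fps (\<lambda>n. rogers_szego (2 * n) s q / qpoch (q\<^sup>2) (q\<^sup>2) n)
           = e_q_at (q\<^sup>2) (s\<^sup>2) * e_q_at (q\<^sup>2) 1 / e_q_at q (- s)) \<and>
         (Abs_fps (\<lambda>n. rogers_szego (2 * n + 1) s q / qpoch (q\<^sup>2) (q\<^sup>2) n)
           = fps_const (1 + s) * (e_q_at (q\<^sup>2) (s\<^sup>2) * e_q_at (q\<^sup>2) 1 / e_q_at q (- q * s)))"
proof -
  have q: "q ^ Suc n \<noteq> 1" for n
    using q_not_root_of_unity[rule_format, of "Suc n"] by simp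
  show ?thesis
    using rogers_szego_half_series[OF q, of 0 s] rogers_szego_half_series[OF q, of 1 s]
    by (simp add: rogers_szego_1[OF q])
qed

end
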